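(* There is a simple set that is $D$-w.e.u.
   Context: $\varphi_0,\varphi_1,\ldots$ is a standard acceptable enumeration of the partial computable functions $\mathbb{N}\to\mathbb{N}$, $\mathcal{W}_e=\operatorname{dom}\varphi_e$, $\mathbb{1}_A$ the characteristic function of $A$, $\overline{A}=\mathbb{N}\setminus A$. A recursively enumerable $A$ is simple if $\overline{A}$ is infinite and contains no infinite recursively enumerable subset. $\mathfrak{P}_{\mathrm{fin}}(\mathbb{N})$ is the set of finite subsets of $\mathbb{N}$; $f\colon\mathbb{N}\to\mathfrak{P}_{\mathrm{fin}}(\mathbb{N})$ is computable if $e\mapsto$ (canonical index of $f(e)$) is computable. A recursively enumerable $A$ is $D$-w.e.u. if there is a computable $f\colon\mathbb{N}\to\mathfrak{P}_{\mathrm{fin}}(\mathbb{N})$ such that for all $e$: if $\varphi_e(z)$ is defined for all $z\in f(e)$, then there is $z\in f(e)$ with $\varphi_e(z)\neq\mathbb{1}_A(z)$. *)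

theory Defs
  imports Main "HOL-Library.Nat_Bijection"
begin

text \<open>Codes of unary partial recursive functions on nat, using Cantor pairing
  (prod_encode / prod_decode) to handle several arguments.\<close>

datatype recf =
    Zero
  | Succ
  | Ident
  | Fst
  | Snd
  | Pair recf recf
  | Comp recf recf
  | PrimRec recf recf
  | Mu recf

definition pr :: "nat \<Rightarrow> nat \<Rightarrow> nat" where "pr a b = prod_encode (a, b)"

inductive eval :: "recf \<Rightarrow> nat \<Rightarrow> nat \<Rightarrow> bool" where
  "eval Zero x 0"
| "eval Succ x (Suc x)"
| "eval Ident x x"
| "eval Fst (pr a b) a"
| "eval Snd (pr a b) b"
| "eval f x y \<Longrightarrow> eval g x z \<Longrightarrow> eval (Pair f g) x (pr y z)"
| "eval g x y \<Longrightarrow> eval f y z \<Longrightarrow> eval (Comp f g) x z"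
| "eval f x y \<Longrightarrow> eval (PrimRec f g) (pr x 0) y"
| "eval (PrimRec f g) (pr x n) y \<Longrightarrow> eval g (pr x (pr n y)) z
     \<Longrightarrow> eval (PrimRec f g) (pr x (Suc n)) z"
| "eval f (pr x n) 0 \<Longrightarrow> (\<forall>m<n. \<exists>k. eval f (pr x m) (Suc k))
     \<Longrightarrow> eval (Mu f) x n"

text \<open>Bijective Goedel numbering of codes: atoms 0..4, compound codes 5 + 4k + tag.\<close>

primrec encode :: "recf \<Rightarrow> nat" where
  "encode Zero = 0"
| "encode Succ = 1"
| "encode Ident = 2"
| "encode Fst = 3"
| "encode Snd = 4"
| "encode (Pair f g) = 5 + 4 * prod_encode (encode f, encode g)"
| "encode (Comp f g) = 5 + 4 * prod_encode (encode f, encode g) + 1"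
| "encode (PrimRec f g) = 5 + 4 * prod_encode (encode f, encode g) + 2"
| "encode (Mu f) = 5 + 4 * encode f + 3"

lemma prod_decode_le: "fst (prod_decode k) \<le> k" "snd (prod_decode k) \<le> k"
proof -
  obtain a b where ab: "prod_decode k = (a, b)" by (cases "prod_decode k")
  hence k: "k = prod_encode (a, b)" by (metis prod_decode_inverse)
  show "fst (prod_decode k) \<le> k" "snd (prod_decode k) \<le> k"
    using ab k le_prod_encode_1 le_prod_encode_2 by auto
qed

function decode :: "nat \<Rightarrow> recf" where
  "decode n =
    (if n = 0 then Zero else if n = 1 then Succ else if n = 2 then Ident
     else if n = 3 then Fst else if n = 4 then Snd
     else (let m = n - 5; k = m div 4; t = m mod 4 in
       if t = 0 then Pair (decode (fst (prod_decode k))) (decode (snd (prod_decode k)))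
       else if t = 1 then Comp (decode (fst (prod_decode k))) (decode (snd (prod_decode k)))
       else if t = 2 then PrimRec (decode (fst (prod_decode k))) (decode (snd (prod_decode k)))
       else Mu (decode k)))"
  by auto
termination
proof (relation "measure id", goal_cases)
  case 1 show ?case by simp
next
  case (2 n m k t) then show ?case
    using prod_decode_le(1)[of "(n - 5) div 4"] by (simp add: Let_def) linarith
next
  case (3 n m k t) then show ?case
    using prod_decode_le(2)[of "(n - 5) div 4"] by (simp add: Let_def) linarith
next
  case (4 n m k t) then show ?case
    using prod_decode_le(1)[of "(n - 5) div 4"] by (simp add: Let_def) linarith
next
  case (5 n m k t) then show ?case
    using prod_decode_le(2)[of "(n - 5) div 4"] by (simp add: Let_def) linarith
next
  case (6 n m k t) then show ?case
    using prod_decode_le(1)[of "(n - 5) div 4"] by (simp add: Let_def) linarith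
next
  case (7 n m k t) then show ?case
    using prod_decode_le(2)[of "(n - 5) div 4"] by (simp add: Let_def) linarith
next
  case (8 n m k t) then show ?case by (simp add: Let_def) linarith
qed

definition phi :: "nat \<Rightarrow> nat \<Rightarrow> nat option" where
  "phi e x = (if \<exists>y. eval (decode e) x y then Some (THE y. eval (decode e) x y) else None)"

definition W :: "nat \<Rightarrow> nat set" where
  "W e = dom (phi e)"

definition re :: "nat set \<Rightarrow> bool" where
  "re A \<longleftrightarrow> (\<exists>e. A = W e)"

definition simple :: "nat set \<Rightarrow> bool" where
  "simple A \<longleftrightarrow> re A \<and> infinite (- A) \<and> (\<forall>e. W e \<subseteq> - A \<longrightarrow> finite (W e))"

text \<open>Canonical index of a finite set: \<open>D_n = {i. bit i of n is 1}\<close>.\<close>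

definition canon_index :: "nat set \<Rightarrow> nat" where
  "canon_index D = (\<Sum>i\<in>D. 2 ^ i)"

definition computable_total :: "(nat \<Rightarrow> nat) \<Rightarrow> bool" where
  "computable_total g \<longleftrightarrow> (\<exists>e. \<forall>x. phi e x = Some (g x))"

definition computable_fin :: "(nat \<Rightarrow> nat set) \<Rightarrow> bool" where
  "computable_fin f \<longleftrightarrow> (\<forall>e. finite (f e)) \<and> computable_total (\<lambda>e. canon_index (f e))"

definition D_weu :: "nat set \<Rightarrow> bool" where
  "D_weu A \<longleftrightarrow> re A \<and>
     (\<exists>f. computable_fin f \<and>
        (\<forall>e. (\<forall>z\<in>f e. phi e z \<noteq> None) \<longrightarrow>
             (\<exists>z\<in>f e. phi e z \<noteq> Some (if z \<in> A then 1 else 0))))"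

end

theory Submission
  imports Defs "HOL-Library.Infinite_Set"
begin

text \<open>A Post-style simple set, combined with a diagonalisation on blocks. The naturals are cut
  into consecutive blocks, block \<open>e\<close> having \<open>2e + 3\<close> elements. To make the set simple,
  requirement \<open>i\<close> puts into it the first element that \<open>W i\<close> enumerates beyond block \<open>i\<close>, so
  block \<open>e\<close> receives at most \<open>e\<close> elements this way, one from each \<open>i < e\<close>. For the
  \<open>D\<close>-w.e.u. property \<open>f e\<close> is block \<open>e\<close>, and the set also contains the first zero of \<open>\<phi>\<^sub>e\<close>
  on block \<open>e\<close>, provided \<open>\<phi>\<^sub>e\<close> converges to nonzero values on the block before it. If \<open>\<phi>\<^sub>e\<close>
  is total on the block, either that zero lies in the set, or all values are nonzero and any
  of the at least \<open>e + 2\<close> points of the block outside the set is a disagreement.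
  Enumerability rests on a primitive recursive, step-bounded evaluator for the numbering.\<close>

section \<open>Total recursive functions\<close>

definition pfst :: "nat \<Rightarrow> nat" where "pfst x = fst (prod_decode x)"
definition psnd :: "nat \<Rightarrow> nat" where "psnd x = snd (prod_decode x)"

lemma pfst_pr [simp]: "pfst (pr a b) = a"
  by (simp add: pfst_def pr_def)

lemma psnd_pr [simp]: "psnd (pr a b) = b"
  by (simp add: psnd_def pr_def)

lemma pr_pfst_psnd [simp]: "pr (pfst x) (psnd x) = x"
  by (simp add: pfst_def psnd_def pr_def)

lemma pr_eq_iff [simp]: "pr a b = pr c d \<longleftrightarrow> a = c \<and> b = d"
  by (simp add: pr_def prod_encode_eq)

lemma pr_mono: "a \<le> c \<Longrightarrow> b \<le> d \<Longrightarrow> pr a b \<le> pr c d"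
  unfolding pr_def prod_encode_def triangle_def by (simp add: div_le_mono mult_le_mono add_mono)

lemma eval_deterministic: "eval r x y \<Longrightarrow> eval r x y' \<Longrightarrow> y = y'"
proof (induction arbitrary: y' rule: eval.induct)
  case (6 f x y g z)
  from "6.prems" show ?case
    by (cases rule: eval.cases) (use "6.IH" in auto)
next
  case (7 g x y f z)
  from "7.prems" obtain y2 where "eval g x y2" "eval f y2 y'"
    by (cases rule: eval.cases) auto
  then show ?case
    using "7.IH" by metis
next
  case (8 f x y g)
  from "8.prems" show ?case
    by (cases rule: eval.cases) (use "8.IH" in auto)
next
  case (9 f g x n y z)
  from "9.prems" show ?case
    by (cases rule: eval.cases) (use "9.IH" in auto)
next
  case (10 f x n)
  from "10.prems" obtain n' where n': "y' = n'" "eval f (pr x n') 0"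
      "\<forall>m<n'. \<exists>k. eval f (pr x m) (Suc k)"
    by (cases rule: eval.cases) auto
  have "\<not> n < n'"
    using n'(3) "10.IH"(1) by (metis nat.distinct(1))
  moreover have "\<not> n' < n"
    using "10.IH"(2) n'(2) by (metis nat.distinct(1))
  ultimately show ?case
    using n'(1) by simp
qed (erule eval.cases; simp)+

definition recursive :: "(nat \<Rightarrow> nat) \<Rightarrow> bool" where
  "recursive f \<longleftrightarrow> (\<exists>r. \<forall>x. eval r x (f x))"

lemma recursive_zero: "recursive (\<lambda>x. 0)"
  unfolding recursive_def by (blast intro: eval.intros)

lemma recursive_id: "recursive (\<lambda>x. x)"
  unfolding recursive_def by (blast intro: eval.intros)

lemma recursive_Succ: "recursive Suc"
  unfolding recursive_def by (blast intro: eval.intros)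

lemma recursive_Fst: "recursive pfst"
  unfolding recursive_def by (metis pr_pfst_psnd pfst_pr eval.intros(4))

lemma recursive_Snd: "recursive psnd"
  unfolding recursive_def by (metis pr_pfst_psnd psnd_pr eval.intros(5))

lemma recursive_comp: "recursive f \<Longrightarrow> recursive g \<Longrightarrow> recursive (\<lambda>x. f (g x))"
  unfolding recursive_def by (blast intro: eval.intros)

lemma recursive_pr: "recursive f \<Longrightarrow> recursive g \<Longrightarrow> recursive (\<lambda>x. pr (f x) (g x))"
  unfolding recursive_def by (blast intro: eval.intros)

lemma recursive_prim_rec:
  assumes "recursive f" "recursive g"
    and "\<And>x. h x 0 = f x" "\<And>x n. h x (Suc n) = g (pr x (pr n (h x n)))"
  shows "recursive (\<lambda>p. h (pfst p) (psnd p))"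
proof -
  from assms(1,2) obtain rf rg where rf: "\<And>x. eval rf x (f x)" and rg: "\<And>x. eval rg x (g x)"
    unfolding recursive_def by blast
  have "eval (PrimRec rf rg) (pr x n) (h x n)" for x n
    by (induction n) (use rf rg assms(3,4) in \<open>auto intro: eval.intros\<close>)
  then have "eval (PrimRec rf rg) p (h (pfst p) (psnd p))" for p
    by (metis pr_pfst_psnd)
  then show ?thesis
    unfolding recursive_def by blast
qed

lemma recursive_const: "recursive (\<lambda>x. c)"
  by (induction c) (use recursive_zero recursive_comp[OF recursive_Succ] in auto)

lemma recursive_Suc: "recursive f \<Longrightarrow> recursive (\<lambda>x. Suc (f x))"
  using recursive_comp[OF recursive_Succ] .

lemma recursive_pfst: "recursive f \<Longrightarrow> recursive (\<lambda>x. pfst (f x))"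
  using recursive_comp[OF recursive_Fst] .

lemma recursive_psnd: "recursive f \<Longrightarrow> recursive (\<lambda>x. psnd (f x))"
  using recursive_comp[OF recursive_Snd] .

lemma recursive_comp2:
  "recursive (\<lambda>p. h (pfst p) (psnd p)) \<Longrightarrow> recursive f \<Longrightarrow> recursive g \<Longrightarrow>
    recursive (\<lambda>x. h (f x) (g x))"
  using recursive_comp[of "\<lambda>p. h (pfst p) (psnd p)" "\<lambda>x. pr (f x) (g x)"] recursive_pr by auto

lemma recursive_add: "recursive f \<Longrightarrow> recursive g \<Longrightarrow> recursive (\<lambda>x. f x + g x)"
proof -
  have "recursive (\<lambda>p. pfst p + psnd p)"
    by (rule recursive_prim_rec[where f="\<lambda>x. x" and g="\<lambda>q. Suc (psnd (psnd q))"])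
      (intro recursive_id recursive_Suc recursive_psnd | simp)+
  then show "recursive f \<Longrightarrow> recursive g \<Longrightarrow> ?thesis"
    by (rule recursive_comp2[where h="(+)"])
qed

lemma recursive_mult: "recursive f \<Longrightarrow> recursive g \<Longrightarrow> recursive (\<lambda>x. f x * g x)"
proof -
  have "recursive (\<lambda>p. pfst p * psnd p)"
    by (rule recursive_prim_rec[where f="\<lambda>x. 0" and g="\<lambda>q. psnd (psnd q) + pfst q"])
      (intro recursive_const recursive_add recursive_pfst recursive_psnd recursive_id
        | simp add: algebra_simps)+
  then show "recursive f \<Longrightarrow> recursive g \<Longrightarrow> ?thesis"
    by (rule recursive_comp2[where h="(*)"])
qed

lemma recursive_pred: "recursive f \<Longrightarrow> recursive (\<lambda>x. f x - 1)"
proof -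
  have "recursive (\<lambda>p. (\<lambda>x n. n - 1) (pfst p) (psnd p))"
    by (rule recursive_prim_rec[where f="\<lambda>x. 0" and g="\<lambda>q. pfst (psnd q)"])
      (intro recursive_const recursive_pfst recursive_psnd recursive_id | simp)+
  from recursive_comp2[OF this recursive_const] show "recursive f \<Longrightarrow> ?thesis"
    by simp
qed

lemma recursive_diff: "recursive f \<Longrightarrow> recursive g \<Longrightarrow> recursive (\<lambda>x. f x - g x)"
proof -
  have "recursive (\<lambda>p. pfst p - psnd p)"
    by (rule recursive_prim_rec[where f="\<lambda>x. x" and g="\<lambda>q. psnd (psnd q) - 1"])
      (intro recursive_id recursive_pred recursive_psnd | simp)+
  then show "recursive f \<Longrightarrow> recursive g \<Longrightarrow> ?thesis"
    by (rule recursive_comp2[where h="(-)"])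
qed

lemma recursive_power2: "recursive f \<Longrightarrow> recursive (\<lambda>x. 2 ^ f x)"
proof -
  have "recursive (\<lambda>p. (\<lambda>x n. 2 ^ n) (pfst p) (psnd p))"
    by (rule recursive_prim_rec[where f="\<lambda>x. 1" and g="\<lambda>q. psnd (psnd q) + psnd (psnd q)"])
      (intro recursive_const recursive_add recursive_psnd recursive_id | simp)+
  from recursive_comp2[OF this recursive_const] show "recursive f \<Longrightarrow> ?thesis"
    by simp
qed

lemma recursive_sum_lessThan:
  assumes h: "recursive (\<lambda>p. h (pfst p) (psnd p))" and k: "recursive k"
  shows "recursive (\<lambda>x. \<Sum>i<k x. h x i)"
proof -
  have "recursive (\<lambda>q. psnd (psnd q) + h (pfst q) (pfst (psnd q)))"
    by (intro recursive_add recursive_psnd recursive_id recursive_comp2[OF h] recursive_pfst)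
  then have "recursive (\<lambda>p. (\<lambda>x n. \<Sum>i<n. h x i) (pfst p) (psnd p))"
    by (rule recursive_prim_rec[OF recursive_const]) auto
  from recursive_comp2[OF this recursive_id k] show ?thesis
    by simp
qed

definition decidable :: "(nat \<Rightarrow> bool) \<Rightarrow> bool" where
  "decidable P \<longleftrightarrow> recursive (\<lambda>x. if P x then 1 else 0)"

lemma recursive_if:
  assumes "decidable P" "recursive f" "recursive g"
  shows "recursive (\<lambda>x. if P x then f x else g x)"
proof -
  have "recursive (\<lambda>x. (if P x then 1 else 0) * f x + (1 - (if P x then 1 else 0)) * g x)"
    using assms unfolding decidable_def
    by (intro recursive_add recursive_mult recursive_diff recursive_const)
  then show ?thesis
    by (rule back_subst[of recursive]) auto
qed

lemma decidable_eq: "recursive f \<Longrightarrow> recursive g \<Longrightarrow> decidable (\<lambda>x. f x = g x)"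
proof -
  assume "recursive f" "recursive g"
  then have "recursive (\<lambda>x. 1 - ((f x - g x) + (g x - f x)))"
    by (intro recursive_add recursive_diff recursive_const)
  then show ?thesis
    unfolding decidable_def by (rule back_subst[of recursive]) auto
qed

lemma decidable_less: "recursive f \<Longrightarrow> recursive g \<Longrightarrow> decidable (\<lambda>x. f x < g x)"
proof -
  assume "recursive f" "recursive g"
  then have "recursive (\<lambda>x. 1 - (1 - (g x - f x)))"
    by (intro recursive_diff recursive_const)
  then show ?thesis
    unfolding decidable_def by (rule back_subst[of recursive]) auto
qed

lemma decidable_le: "recursive f \<Longrightarrow> recursive g \<Longrightarrow> decidable (\<lambda>x. f x \<le> g x)"
  using decidable_less[of f "\<lambda>x. Suc (g x)"] recursive_Suc by (simp add: less_Suc_eq_le)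

lemma decidable_not: "decidable P \<Longrightarrow> decidable (\<lambda>x. \<not> P x)"
proof -
  assume "decidable P"
  then have "recursive (\<lambda>x. 1 - (if P x then 1 else 0))"
    unfolding decidable_def by (intro recursive_diff recursive_const)
  then show ?thesis
    unfolding decidable_def by (rule back_subst[of recursive]) auto
qed

lemma decidable_conj: "decidable P \<Longrightarrow> decidable Q \<Longrightarrow> decidable (\<lambda>x. P x \<and> Q x)"
proof -
  assume "decidable P" "decidable Q"
  then have "recursive (\<lambda>x. (if P x then 1 else 0) * (if Q x then 1 else 0))"
    unfolding decidable_def by (intro recursive_mult)
  then show ?thesis
    unfolding decidable_def by (rule back_subst[of recursive]) auto
qed

lemma decidable_disj: "decidable P \<Longrightarrow> decidable Q \<Longrightarrow> decidable (\<lambda>x. P x \<or> Q x)"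
  using decidable_not[OF decidable_conj[OF decidable_not decidable_not], of P Q] by simp

lemma decidable_imp: "decidable P \<Longrightarrow> decidable Q \<Longrightarrow> decidable (\<lambda>x. P x \<longrightarrow> Q x)"
  using decidable_disj[OF decidable_not, of P Q] by simp

lemma decidable_ex_less:
  assumes "decidable (\<lambda>p. P (pfst p) (psnd p))" "recursive k"
  shows "decidable (\<lambda>x. \<exists>i<k x. P x i)"
proof -
  have "(0 < (\<Sum>i<n. if P x i then 1 else 0::nat)) \<longleftrightarrow> (\<exists>i<n. P x i)" for x n
    by (induction n) (auto simp: less_Suc_eq)
  moreover from assms have "recursive (\<lambda>x. \<Sum>i<k x. (if P x i then 1 else 0))"
    unfolding decidable_def by (intro recursive_sum_lessThan) auto
  then have "decidable (\<lambda>x. 0 < (\<Sum>i<k x. (if P x i then 1 else 0::nat)))"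
    using decidable_less[OF recursive_const] by blast
  ultimately show ?thesis
    by simp
qed

lemma decidable_all_less:
  assumes "decidable (\<lambda>p. P (pfst p) (psnd p))" "recursive k"
  shows "decidable (\<lambda>x. \<forall>i<k x. P x i)"
proof -
  have "decidable (\<lambda>x. \<not> (\<exists>i<k x. \<not> P x i))"
    by (intro decidable_not decidable_ex_less[where P="\<lambda>x i. \<not> P x i"] assms)
  then show ?thesis
    by simp
qed

lemma div_eq_card_multiples:
  assumes "0 < b"
  shows "a div b = (\<Sum>q<a. if (q + 1) * b \<le> a then 1 else 0::nat)"
proof -
  have "(q + 1) * b \<le> a \<longleftrightarrow> q < a div b" for q
    using less_eq_div_iff_mult_less_eq[OF assms, of "Suc q" a] by (simp add: Suc_le_eq)
  moreover have "q < a div b \<Longrightarrow> q < a" for q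
    using div_le_dividend[of a b] by linarith
  ultimately have "{q. q < a \<and> (q + 1) * b \<le> a} = {..<a div b}"
    by blast
  then show ?thesis
    by (simp add: sum.If_cases Int_def)
qed

lemma recursive_div: "recursive f \<Longrightarrow> recursive g \<Longrightarrow> recursive (\<lambda>x. f x div g x)"
proof -
  assume f: "recursive f" and g: "recursive g"
  have "recursive (\<lambda>x. if g x = 0 then 0 else (\<Sum>q<f x. if (q + 1) * g x \<le> f x then 1 else 0))"
    by (intro recursive_if decidable_eq decidable_le f g recursive_const recursive_sum_lessThan
        recursive_mult recursive_add recursive_pfst recursive_psnd recursive_id
        recursive_comp[OF f] recursive_comp[OF g])
  then show ?thesis
    by (rule back_subst[of recursive]) (auto simp: div_eq_card_multiples)
qed

lemma recursive_mod: "recursive f \<Longrightarrow> recursive g \<Longrightarrow> recursive (\<lambda>x. f x mod g x)"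
proof -
  assume "recursive f" "recursive g"
  then have "recursive (\<lambda>x. f x - g x * (f x div g x))"
    by (intro recursive_diff recursive_mult recursive_div)
  then show ?thesis
    by (simp add: minus_mult_div_eq_mod)
qed

lemma decidable_odd: "recursive f \<Longrightarrow> decidable (\<lambda>x. odd (f x))"
proof -
  assume "recursive f"
  then have "decidable (\<lambda>x. f x mod 2 = 1)"
    by (intro decidable_eq recursive_mod recursive_const)
  then show ?thesis
    by (simp add: odd_iff_mod_2_eq_one)
qed

lemmas recursive_intros = recursive_const recursive_id recursive_Suc recursive_pfst recursive_psnd
  recursive_pr recursive_add recursive_mult recursive_diff recursive_power2 recursive_div
  recursive_mod recursive_if
lemmas decidable_intros = decidable_eq decidable_less decidable_le decidable_not decidable_conj
  decidable_disj decidable_imp decidable_ex_less decidable_all_less decidable_odd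

section \<open>Bounded evaluation\<close>

declare decode.simps [simp del]

lemma decode_less5:
  "decode 0 = Zero" "decode (Suc 0) = Succ" "decode 2 = Ident" "decode 3 = Fst" "decode 4 = Snd"
  by (subst decode.simps; simp)+

lemma decode_ge5:
  assumes "5 \<le> c"
  shows "decode c =
    (let k = (c - 5) div 4 in
      if (c - 5) mod 4 = 0 then Pair (decode (pfst k)) (decode (psnd k))
      else if (c - 5) mod 4 = 1 then Comp (decode (pfst k)) (decode (psnd k))
      else if (c - 5) mod 4 = 2 then PrimRec (decode (pfst k)) (decode (psnd k))
      else Mu (decode k))"
  using assms by (subst decode.simps) (simp add: Let_def pfst_def psnd_def)

lemma decode_eq_compound:
  fixes c :: nat
  defines "k \<equiv> (c - 5) div 4"
  shows
    "decode c = Pair f g \<Longrightarrow> 5 \<le> c \<and> (c - 5) mod 4 = 0 \<and> decode (pfst k) = f \<and> decode (psnd k) = g"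
    "decode c = Comp f g \<Longrightarrow> 5 \<le> c \<and> (c - 5) mod 4 = 1 \<and> decode (pfst k) = f \<and> decode (psnd k) = g"
    "decode c = PrimRec f g \<Longrightarrow>
      5 \<le> c \<and> (c - 5) mod 4 = 2 \<and> decode (pfst k) = f \<and> decode (psnd k) = g"
    "decode c = Mu f \<Longrightarrow> 5 \<le> c \<and> (c - 5) mod 4 = 3 \<and> decode k = f"
proof -
  have small: "decode c \<in> {Zero, Succ, Ident, Fst, Snd}" if "c < 5"
    using that by (subst decode.simps) auto
  have "(c - 5) mod 4 < 4"
    by simp
  then have "(c - 5) mod 4 \<in> {0, 1, 2, 3}"
    by auto
  then show
    "decode c = Pair f g \<Longrightarrow> 5 \<le> c \<and> (c - 5) mod 4 = 0 \<and> decode (pfst k) = f \<and> decode (psnd k) = g"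
    "decode c = Comp f g \<Longrightarrow> 5 \<le> c \<and> (c - 5) mod 4 = 1 \<and> decode (pfst k) = f \<and> decode (psnd k) = g"
    "decode c = PrimRec f g \<Longrightarrow>
      5 \<le> c \<and> (c - 5) mod 4 = 2 \<and> decode (pfst k) = f \<and> decode (psnd k) = g"
    "decode c = Mu f \<Longrightarrow> 5 \<le> c \<and> (c - 5) mod 4 = 3 \<and> decode k = f"
    using small by (cases "c < 5"; auto simp: decode_ge5 k_def Let_def)+
qed

lemma decode_eq_atomic:
  "decode c = Zero \<Longrightarrow> c = 0" "decode c = Succ \<Longrightarrow> c = 1" "decode c = Ident \<Longrightarrow> c = 2"
  "decode c = Fst \<Longrightarrow> c = 3" "decode c = Snd \<Longrightarrow> c = 4"
  by (cases "c < 5"; subst (asm) decode.simps; auto simp: Let_def split: if_splits)+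

lemma decode_compound:
  assumes "t < 4"
  shows "decode (5 + 4 * k + t) =
    (if t = 0 then Pair (decode (pfst k)) (decode (psnd k))
     else if t = 1 then Comp (decode (pfst k)) (decode (psnd k))
     else if t = 2 then PrimRec (decode (pfst k)) (decode (psnd k))
     else Mu (decode k))"
proof -
  have "(5 + 4 * k + t - 5) div 4 = k" "(5 + 4 * k + t - 5) mod 4 = t"
    using assms by simp_all
  then show ?thesis
    by (simp add: decode_ge5 Let_def)
qed

lemma decode_encode: "decode (encode r) = r"
proof (induction r)
  case (Pair f g)
  then show ?case
    using decode_compound[of 0 "prod_encode (encode f, encode g)"] by (simp add: pfst_def psnd_def)
next
  case (Comp f g)
  then show ?case
    using decode_compound[of 1 "prod_encode (encode f, encode g)"] by (simp add: pfst_def psnd_def)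
next
  case (PrimRec f g)
  then show ?case
    using decode_compound[of 2 "prod_encode (encode f, encode g)"] by (simp add: pfst_def psnd_def)
next
  case (Mu f)
  then show ?case
    using decode_compound[of 3 "encode f"] by simp
qed (simp_all add: decode_less5)

text \<open>One rule of \<open>eval\<close>, read off from the arithmetic shape of the code \<open>c\<close>, with the
  premises supplied by \<open>M\<close> and each intermediate value bounded by \<open>b\<close>.\<close>

definition eval_step ::
    "nat \<Rightarrow> (nat \<Rightarrow> nat \<Rightarrow> nat \<Rightarrow> bool) \<Rightarrow> nat \<Rightarrow> nat \<Rightarrow> nat \<Rightarrow> bool" where
  "eval_step b M c x y \<longleftrightarrow>
    (c = 0 \<and> y = 0) \<or> (c = 1 \<and> y = Suc x) \<or> (c = 2 \<and> y = x) \<or>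
    (c = 3 \<and> y = pfst x) \<or> (c = 4 \<and> y = psnd x) \<or>
    (5 \<le> c \<and> (c - 5) mod 4 = 0 \<and>
      M (pfst ((c - 5) div 4)) x (pfst y) \<and> M (psnd ((c - 5) div 4)) x (psnd y)) \<or>
    (5 \<le> c \<and> (c - 5) mod 4 = 1 \<and>
      (\<exists>z<b. M (psnd ((c - 5) div 4)) x z \<and> M (pfst ((c - 5) div 4)) z y)) \<or>
    (5 \<le> c \<and> (c - 5) mod 4 = 2 \<and>
      ((psnd x = 0 \<and> M (pfst ((c - 5) div 4)) (pfst x) y) \<or>
       (0 < psnd x \<and> (\<exists>z<b. M c (pr (pfst x) (psnd x - 1)) z \<and>
          M (psnd ((c - 5) div 4)) (pr (pfst x) (pr (psnd x - 1) z)) y)))) \<or>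
    (5 \<le> c \<and> (c - 5) mod 4 = 3 \<and> M ((c - 5) div 4) (pr x y) 0 \<and>
      (\<forall>m<y. \<exists>v<b. M ((c - 5) div 4) (pr x m) (Suc v)))"

text \<open>Only bounded quantifiers occur, so this
  is decidable, while its union over \<open>s\<close> is \<open>eval\<close>.\<close>

primrec eval_within :: "nat \<Rightarrow> nat \<Rightarrow> nat \<Rightarrow> nat \<Rightarrow> bool" where
  "eval_within 0 c x y = False"
| "eval_within (Suc s) c x y =
    (c \<le> s \<and> x \<le> s \<and> y \<le> s \<and> eval_step (Suc s) (eval_within s) c x y)"

lemma eval_within_bound: "eval_within s c x y \<Longrightarrow> c < s \<and> x < s \<and> y < s"
  by (cases s) auto

lemma eval_step_mono:
  "eval_step b M c x y \<Longrightarrow> b \<le> b' \<Longrightarrow> (\<And>c x y. M c x y \<Longrightarrow> M' c x y) \<Longrightarrow>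
    eval_step b' M' c x y"
  unfolding eval_step_def by (elim disjE) (auto intro: order_less_le_trans; meson order_less_le_trans)+

lemma eval_within_Suc: "eval_within s c x y \<Longrightarrow> eval_within (Suc s) c x y"
  by (induction s arbitrary: c x y) (auto elim!: eval_step_mono)

lemma eval_within_mono:
  assumes "eval_within s c x y" "s \<le> s'"
  shows "eval_within s' c x y"
  using assms(2) by (induction rule: dec_induct) (use assms(1) eval_within_Suc in auto)

lemma eventually_eval_within_iff:
  "eventually (\<lambda>s. eval_within s c x y) sequentially \<longleftrightarrow> (\<exists>s. eval_within s c x y)"
  unfolding eventually_sequentially by (meson eval_within_mono order_refl)

lemma eval_step_sound:
  assumes "eval_step b M c x y" and M: "\<And>c x y. M c x y \<Longrightarrow> eval (decode c) x y"
  shows "eval (decode c) x y"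
  using assms(1) unfolding eval_step_def
proof (elim disjE conjE exE)
  assume "c = 3" "y = pfst x"
  then show ?thesis
    using eval.intros(4)[of "pfst x" "psnd x"] by (simp add: decode_less5)
next
  assume "c = 4" "y = psnd x"
  then show ?thesis
    using eval.intros(5)[of "pfst x" "psnd x"] by (simp add: decode_less5)
next
  assume c: "5 \<le> c" "(c - 5) mod 4 = 0" and m: "M (pfst ((c - 5) div 4)) x (pfst y)"
    "M (psnd ((c - 5) div 4)) x (psnd y)"
  have "eval (Pair (decode (pfst ((c - 5) div 4))) (decode (psnd ((c - 5) div 4))))
      x (pr (pfst y) (psnd y))"
    by (rule eval.intros(6)[OF M[OF m(1)] M[OF m(2)]])
  with c show ?thesis
    by (simp add: decode_ge5 Let_def)
next
  fix z assume "5 \<le> c" "(c - 5) mod 4 = 1" "M (psnd ((c - 5) div 4)) x z"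
    "M (pfst ((c - 5) div 4)) z y"
  then show ?thesis
    using eval.intros(7)[OF M M] by (simp add: decode_ge5 Let_def)
next
  assume c: "5 \<le> c" "(c - 5) mod 4 = 2" and x: "psnd x = 0"
    and m: "M (pfst ((c - 5) div 4)) (pfst x) y"
  have "eval (PrimRec (decode (pfst ((c - 5) div 4))) (decode (psnd ((c - 5) div 4))))
      (pr (pfst x) 0) y"
    by (rule eval.intros(8)[OF M[OF m]])
  with c x show ?thesis
    using pr_pfst_psnd[of x] by (simp add: decode_ge5 Let_def)
next
  fix z assume c: "5 \<le> c" "(c - 5) mod 4 = 2" and x: "0 < psnd x"
    and m: "M c (pr (pfst x) (psnd x - 1)) z"
      "M (psnd ((c - 5) div 4)) (pr (pfst x) (pr (psnd x - 1) z)) y"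
  have dc: "decode c = PrimRec (decode (pfst ((c - 5) div 4))) (decode (psnd ((c - 5) div 4)))"
    using c by (simp add: decode_ge5 Let_def)
  have "eval (decode c) (pr (pfst x) (Suc (psnd x - 1))) y"
    unfolding dc by (rule eval.intros(9)[OF M[OF m(1), unfolded dc] M[OF m(2)]])
  with x show ?thesis
    by simp
next
  assume "5 \<le> c" "(c - 5) mod 4 = 3" "M ((c - 5) div 4) (pr x y) 0"
    "\<forall>m<y. \<exists>v<b. M ((c - 5) div 4) (pr x m) (Suc v)"
  then show ?thesis
    using M by (simp add: decode_ge5 Let_def) (blast intro: eval.intros(10))
qed (simp_all add: decode_less5 eval.intros)

lemma eval_within_sound: "eval_within s c x y \<Longrightarrow> eval (decode c) x y"
  by (induction s arbitrary: c x y) (auto elim: eval_step_sound)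

lemma eventually_eval_within_SucI:
  assumes "eventually (\<lambda>s. eval_step (Suc s) (eval_within s) c x y) sequentially"
  shows "eventually (\<lambda>s. eval_within s c x y) sequentially"
proof -
  have "eventually (\<lambda>s. c \<le> s \<and> x \<le> s \<and> y \<le> s) sequentially"
    by (intro eventually_conj eventually_ge_at_top)
  with assms have "eventually (\<lambda>s. eval_within (Suc s) c x y) sequentially"
    by eventually_elim simp
  then show ?thesis
    by (rule eventually_sequentially_Suc[THEN iffD1])
qed

lemma eventually_all_less_ex_bounded:
  fixes n :: nat and P :: "nat \<Rightarrow> nat \<Rightarrow> nat \<Rightarrow> bool"
  assumes "\<And>m. m < n \<Longrightarrow> \<exists>v. eventually (\<lambda>s. P s m v) sequentially"
  shows "eventually (\<lambda>s. \<forall>m<n. \<exists>v<Suc s. P s m v) sequentially"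
proof -
  have "eventually (\<lambda>s. \<exists>v<Suc s. P s m v) sequentially" if "m < n" for m
  proof -
    from assms[OF that] obtain v where "eventually (\<lambda>s. P s m v) sequentially" ..
    moreover have "eventually (\<lambda>s. v \<le> s) sequentially"
      by simp
    ultimately show ?thesis
      by eventually_elim (blast intro: le_imp_less_Suc)
  qed
  then have "eventually (\<lambda>s. \<forall>m\<in>{..<n}. \<exists>v<Suc s. P s m v) sequentially"
    by (intro eventually_ball_finite) auto
  then show ?thesis
    by (auto elim: eventually_mono)
qed

lemma eval_within_complete:
  "eval r x y \<Longrightarrow> decode c = r \<Longrightarrow> eventually (\<lambda>s. eval_within s c x y) sequentially"
proof (induction arbitrary: c rule: eval.induct)
  case (6 f x y g z)
  note c = decode_eq_compound(1)[OF "6.prems"]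
  have "eventually (\<lambda>s. eval_within s (pfst ((c - 5) div 4)) x y) sequentially"
    "eventually (\<lambda>s. eval_within s (psnd ((c - 5) div 4)) x z) sequentially"
    using "6.IH" c by blast+
  then have "eventually (\<lambda>s. eval_step (Suc s) (eval_within s) c x (pr y z)) sequentially"
    by eventually_elim (use c in \<open>simp add: eval_step_def\<close>)
  then show ?case
    by (rule eventually_eval_within_SucI)
next
  case (7 g x y f z)
  note c = decode_eq_compound(2)[OF "7.prems"]
  have "eventually (\<lambda>s. eval_within s (psnd ((c - 5) div 4)) x y) sequentially"
    "eventually (\<lambda>s. eval_within s (pfst ((c - 5) div 4)) y z) sequentially"
    using "7.IH" c by blast+
  moreover have "eventually (\<lambda>s. y \<le> s) sequentially"
    by simp
  ultimately have "eventually (\<lambda>s. eval_step (Suc s) (eval_within s) c x z) sequentially"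
    by eventually_elim (use c in \<open>simp add: eval_step_def; blast intro: le_imp_less_Suc\<close>)
  then show ?case
    by (rule eventually_eval_within_SucI)
next
  case (8 f x y g)
  note c = decode_eq_compound(3)[OF "8.prems"]
  have "eventually (\<lambda>s. eval_within s (pfst ((c - 5) div 4)) x y) sequentially"
    using "8.IH" c by blast
  then have "eventually (\<lambda>s. eval_step (Suc s) (eval_within s) c (pr x 0) y) sequentially"
    by eventually_elim (use c in \<open>simp add: eval_step_def\<close>)
  then show ?case
    by (rule eventually_eval_within_SucI)
next
  case (9 f g x n y z)
  note c = decode_eq_compound(3)[OF "9.prems"]
  have "eventually (\<lambda>s. eval_within s c (pr x n) y) sequentially"
    "eventually (\<lambda>s. eval_within s (psnd ((c - 5) div 4)) (pr x (pr n y)) z) sequentially"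
    using "9.IH" "9.prems" c by blast+
  moreover have "eventually (\<lambda>s. y \<le> s) sequentially"
    by simp
  ultimately have "eventually (\<lambda>s. eval_step (Suc s) (eval_within s) c (pr x (Suc n)) z) sequentially"
    by eventually_elim (use c in \<open>simp add: eval_step_def; blast intro: le_imp_less_Suc\<close>)
  then show ?case
    by (rule eventually_eval_within_SucI)
next
  case (10 f x n)
  note c = decode_eq_compound(4)[OF "10.prems"]
  have "eventually (\<lambda>s. \<forall>m<n. \<exists>v<Suc s. eval_within s ((c - 5) div 4) (pr x m) (Suc v))
      sequentially"
    using "10.IH"(2) c by (intro eventually_all_less_ex_bounded) blast
  moreover have "eventually (\<lambda>s. eval_within s ((c - 5) div 4) (pr x n) 0) sequentially"
    using "10.IH"(1) c by blast
  ultimately have "eventually (\<lambda>s. eval_step (Suc s) (eval_within s) c x n) sequentially"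
    by eventually_elim (use c in \<open>simp add: eval_step_def\<close>)
  then show ?case
    by (rule eventually_eval_within_SucI)
qed (auto dest!: decode_eq_atomic intro!: eventually_eval_within_SucI simp: eval_step_def)

lemma eval_iff_eval_within: "eval (decode c) x y \<longleftrightarrow> (\<exists>s. eval_within s c x y)"
  using eval_within_complete eval_within_sound eventually_eval_within_iff by blast

lemma phi_eq_Some_iff: "phi e x = Some y \<longleftrightarrow> eval (decode e) x y"
proof -
  have "(THE y. eval (decode e) x y) = y" if "eval (decode e) x y" for y
    using that eval_deterministic by blast
  then show ?thesis
    unfolding phi_def by auto
qed

lemma phi_ne_None_iff: "phi e x \<noteq> None \<longleftrightarrow> (\<exists>y. eval (decode e) x y)"
  by (metis not_None_eq phi_eq_Some_iff)

lemma computable_total_if_recursive: "recursive f \<Longrightarrow> computable_total f"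
  unfolding recursive_def computable_total_def
  by (metis decode_encode phi_eq_Some_iff)

lemma phi_eq_Some_iff_eval_within: "phi e x = Some y \<longleftrightarrow> (\<exists>s. eval_within s e x y)"
  by (simp add: phi_eq_Some_iff eval_iff_eval_within)

lemma W_iff_eval_within: "x \<in> W e \<longleftrightarrow> (\<exists>s y. eval_within s e x y)"
  unfolding W_def domIff phi_ne_None_iff eval_iff_eval_within by blast

definition table_mem :: "nat \<Rightarrow> nat \<Rightarrow> nat \<Rightarrow> nat \<Rightarrow> bool" where
  "table_mem T c x y \<longleftrightarrow> odd (T div 2 ^ pr c (pr x y))"

text \<open>All true instances of \<open>eval_within s\<close> packed into one number. It is computed from the
  table for \<open>s - 1\<close>, turning the recursion on \<open>s\<close> into a primitive recursion.\<close>

definition eval_table :: "nat \<Rightarrow> nat" where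
  "eval_table s = set_encode {t. eval_within s (pfst t) (pfst (psnd t)) (psnd (psnd t))}"

definition eval_table_step :: "nat \<Rightarrow> nat \<Rightarrow> nat" where
  "eval_table_step s T = (\<Sum>t<Suc (pr s (pr s s)).
     if pfst t \<le> s \<and> pfst (psnd t) \<le> s \<and> psnd (psnd t) \<le> s \<and>
        eval_step (Suc s) (table_mem T) (pfst t) (pfst (psnd t)) (psnd (psnd t))
     then 2 ^ t else 0)"

lemma le_pr_pr:
  assumes "pfst t \<le> a" "pfst (psnd t) \<le> b" "psnd (psnd t) \<le> c"
  shows "t \<le> pr a (pr b c)"
proof -
  have "pr (pfst t) (pr (pfst (psnd t)) (psnd (psnd t))) \<le> pr a (pr b c)"
    using assms by (intro pr_mono) auto
  then show ?thesis
    by simp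
qed

lemma table_mem_eval_table: "table_mem (eval_table s) = eval_within s"
proof (intro ext)
  fix c x y
  have "finite {t. eval_within s (pfst t) (pfst (psnd t)) (psnd (psnd t))}"
    by (rule finite_subset[of _ "{..pr s (pr s s)}"])
      (auto dest!: eval_within_bound intro: le_pr_pr)
  then show "table_mem (eval_table s) c x y = eval_within s c x y"
    unfolding table_mem_def eval_table_def
    by (metis (no_types, lifting) mem_Collect_eq set_decode_def set_encode_inverse
        pfst_pr psnd_pr)
qed

lemma eval_table_0: "eval_table 0 = 0"
  by (simp add: eval_table_def)

lemma eval_table_Suc: "eval_table (Suc s) = eval_table_step s (eval_table s)"
proof -
  have set_eq: "{t. eval_within (Suc s) (pfst t) (pfst (psnd t)) (psnd (psnd t))} =
      {t \<in> {..<Suc (pr s (pr s s))}. pfst t \<le> s \<and> pfst (psnd t) \<le> s \<and> psnd (psnd t) \<le> s \<and>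
        eval_step (Suc s) (table_mem (eval_table s)) (pfst t) (pfst (psnd t)) (psnd (psnd t))}"
    by (auto simp: table_mem_eval_table less_Suc_eq_le intro: le_pr_pr)
  show ?thesis
    unfolding eval_table_step_def eval_table_def[of "Suc s"] set_encode_def set_eq
    by (rule sum.inter_filter[OF finite_lessThan])
qed

lemma recursive_eval_table: "recursive eval_table"
proof -
  have "recursive (\<lambda>p. eval_table_step (pfst p) (psnd p))"
    unfolding eval_table_step_def eval_step_def table_mem_def
    by (intro recursive_sum_lessThan recursive_intros decidable_intros)
  then have "recursive (\<lambda>q. eval_table_step (pfst (psnd q)) (psnd (psnd q)))"
    by (rule recursive_comp2) (intro recursive_intros)+
  then have "recursive (\<lambda>p. (\<lambda>x s. eval_table s) (pfst p) (psnd p))"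
    by (rule recursive_prim_rec[OF recursive_const]) (simp_all add: eval_table_0 eval_table_Suc)
  from recursive_comp2[OF this recursive_const recursive_id] show ?thesis
    by simp
qed

lemma decidable_eval_within:
  assumes "recursive s" "recursive c" "recursive x" "recursive y"
  shows "decidable (\<lambda>q. eval_within (s q) (c q) (x q) (y q))"
proof -
  have "decidable (\<lambda>q. table_mem (eval_table (s q)) (c q) (x q) (y q))"
    unfolding table_mem_def by (intro decidable_intros recursive_intros
        recursive_comp[OF recursive_eval_table] assms)
  then show ?thesis
    by (simp add: table_mem_eval_table)
qed

lemma re_ex_decidable:
  assumes "decidable P"
  shows "re {x. \<exists>n. P (pr x n)}"
proof -
  have "recursive (\<lambda>q. 1 - (if P q then 1 else 0))"
    using assms unfolding decidable_def by (intro recursive_diff recursive_const)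
  then have "recursive (\<lambda>q. if P q then 0 else 1)"
    by (rule back_subst[of recursive]) auto
  then obtain r where r: "\<And>q. eval r q (if P q then 0 else 1)"
    unfolding recursive_def by blast
  have "(\<exists>y. eval (Mu r) x y) \<longleftrightarrow> (\<exists>n. P (pr x n))" for x
  proof
    assume "\<exists>y. eval (Mu r) x y"
    then obtain y where "eval (Mu r) x y" ..
    then have "eval r (pr x y) 0"
      by (cases rule: eval.cases) auto
    then have "(if P (pr x y) then 0 else 1::nat) = 0"
      using eval_deterministic r by blast
    then show "\<exists>n. P (pr x n)"
      by (auto split: if_splits)
  next
    assume "\<exists>n. P (pr x n)"
    define n where "n = (LEAST n. P (pr x n))"
    have "P (pr x n)"
      unfolding n_def by (rule LeastI_ex) fact
    then have "eval r (pr x n) 0"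
      using r[of "pr x n"] by simp
    moreover have "\<forall>m<n. \<exists>k. eval r (pr x m) (Suc k)"
    proof (intro allI impI)
      fix m assume "m < n"
      then have "\<not> P (pr x m)"
        unfolding n_def by (rule not_less_Least)
      then have "eval r (pr x m) (Suc 0)"
        using r[of "pr x m"] by simp
      then show "\<exists>k. eval r (pr x m) (Suc k)" ..
    qed
    ultimately show "\<exists>y. eval (Mu r) x y"
      by (blast intro: eval.intros(10))
  qed
  then have "W (encode (Mu r)) = {x. \<exists>n. P (pr x n)}"
    unfolding W_def dom_def phi_ne_None_iff decode_encode by simp
  then show ?thesis
    unfolding re_def by metis
qed

section \<open>A simple \<open>D\<close>-w.e.u. set\<close>

definition block :: "nat \<Rightarrow> nat set" where
  "block e = {e * e + 2 * e..<e * e + 4 * e + 3}"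

lemma mem_block_iff: "y \<in> block e \<longleftrightarrow> e * e + 2 * e \<le> y \<and> y < e * e + 4 * e + 3"
  by (simp add: block_def)

lemma finite_block: "finite (block e)"
  by (simp add: block_def)

lemma card_block: "card (block e) = 2 * e + 3"
  by (simp add: block_def)

lemma block_end_le_start: "(e::nat) < e' \<Longrightarrow> e * e + 4 * e + 3 \<le> e' * e' + 2 * e'"
proof -
  assume "e < e'"
  then have "e + 1 \<le> e'"
    by linarith
  moreover from this have "(e + 1) * (e + 1) \<le> e' * e'"
    by (intro mult_le_mono)
  ultimately show ?thesis
    by (simp add: algebra_simps)
qed

lemma block_unique: "y \<in> block e \<Longrightarrow> y \<in> block e' \<Longrightarrow> e = e'"
  using block_end_le_start[of e e'] block_end_le_start[of e' e]
  by (auto simp: mem_block_iff) (metis leD le_less_trans linorder_neqE_nat)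

lemma canon_index_block: "canon_index (block e) = 2 ^ (e * e + 4 * e + 3) - 2 ^ (e * e + 2 * e)"
proof -
  have "(\<Sum>i\<in>{a..<b}. 2 ^ i) = (2::nat) ^ b - 2 ^ a" if "a \<le> b" for a b
    using that
  proof (induction b rule: dec_induct)
    case (step n)
    then show ?case
      using power_increasing[of a n "2::nat"] by simp
  qed simp
  then show ?thesis
    by (simp add: canon_index_def block_def)
qed

text \<open>The bound \<open>y' < s'\<close> only serves decidability: it is implied by
  \<open>enumerated_beyond s' i y'\<close>.\<close>

definition enumerated_beyond :: "nat \<Rightarrow> nat \<Rightarrow> nat \<Rightarrow> bool" where
  "enumerated_beyond s i y \<longleftrightarrow> i * i + 4 * i + 3 \<le> y \<and> (\<exists>v<s. eval_within s i y v)"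

definition first_enumerated :: "nat \<Rightarrow> nat \<Rightarrow> nat \<Rightarrow> bool" where
  "first_enumerated i s y \<longleftrightarrow> enumerated_beyond s i y \<and> (\<forall>y'<y. \<not> enumerated_beyond s i y') \<and>
     (\<forall>s'<s. \<forall>y'<s'. \<not> enumerated_beyond s' i y')"

definition diag_witness :: "nat \<Rightarrow> bool" where
  "diag_witness z \<longleftrightarrow> (\<exists>e. z \<in> block e \<and> phi e z = Some 0 \<and>
     (\<forall>z'<z. z' \<in> block e \<longrightarrow> (\<exists>v. v \<noteq> 0 \<and> phi e z' = Some v)))"

definition diag_witness_within :: "nat \<Rightarrow> nat \<Rightarrow> bool" where
  "diag_witness_within s z \<longleftrightarrow> (\<exists>e<s. z \<in> block e \<and> eval_within s e z 0 \<and>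
     (\<forall>z'<z. z' \<in> block e \<longrightarrow> (\<exists>v<s. 0 < v \<and> eval_within s e z' v)))"

definition simple_weu_set :: "nat set" where
  "simple_weu_set = {y. (\<exists>i s. first_enumerated i s y) \<or> diag_witness y}"

lemma diag_witness_iff: "diag_witness z \<longleftrightarrow> (\<exists>s. diag_witness_within s z)"
proof
  assume "diag_witness z"
  then obtain e where e: "z \<in> block e" "phi e z = Some 0"
    "\<forall>z'<z. z' \<in> block e \<longrightarrow> (\<exists>v. v \<noteq> 0 \<and> phi e z' = Some v)"
    unfolding diag_witness_def by blast
  have "eventually (\<lambda>s. z' \<in> block e \<longrightarrow> (\<exists>v<s. 0 < v \<and> eval_within s e z' v)) sequentially"
    if "z' < z" for z'
  proof (cases "z' \<in> block e")
    case True
    with e(3) that obtain v where "v \<noteq> 0" "phi e z' = Some v"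
      by blast
    then have "eventually (\<lambda>s. eval_within s e z' v) sequentially"
      by (simp add: phi_eq_Some_iff_eval_within eventually_eval_within_iff)
    then show ?thesis
      by eventually_elim (use \<open>v \<noteq> 0\<close> eval_within_bound in blast)
  qed simp
  then have "eventually (\<lambda>s. \<forall>z'\<in>{..<z}. z' \<in> block e \<longrightarrow>
      (\<exists>v<s. 0 < v \<and> eval_within s e z' v)) sequentially"
    by (intro eventually_ball_finite) auto
  moreover have "eventually (\<lambda>s. eval_within s e z 0) sequentially"
    using e(2) by (simp add: phi_eq_Some_iff_eval_within eventually_eval_within_iff)
  moreover have "eventually (\<lambda>s. e < s) sequentially"
    by simp
  ultimately have "eventually (\<lambda>s. diag_witness_within s z) sequentially"
    by eventually_elim (use e(1) in \<open>auto simp: diag_witness_within_def\<close>)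
  then show "\<exists>s. diag_witness_within s z"
    by (auto simp: eventually_sequentially)
next
  assume "\<exists>s. diag_witness_within s z"
  then show "diag_witness z"
    unfolding diag_witness_def diag_witness_within_def phi_eq_Some_iff_eval_within
    by (metis less_nat_zero_code)
qed

lemma simple_weu_set_eq:
  "simple_weu_set = {y. \<exists>n. first_enumerated (pfst n) (psnd n) y \<or> diag_witness_within n y}"
  unfolding simple_weu_set_def diag_witness_iff by (metis pfst_pr psnd_pr)

lemma re_simple_weu_set: "re simple_weu_set"
proof -
  have "decidable (\<lambda>q. first_enumerated (pfst (psnd q)) (psnd (psnd q)) (pfst q) \<or>
      diag_witness_within (psnd q) (pfst q))"
    unfolding first_enumerated_def enumerated_beyond_def diag_witness_within_def mem_block_iff
    by (intro decidable_intros recursive_intros decidable_eval_within)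
  from re_ex_decidable[OF this] show ?thesis
    by (simp add: simple_weu_set_eq)
qed

lemma enumerated_beyond_less: "enumerated_beyond s i y \<Longrightarrow> y < s"
  unfolding enumerated_beyond_def using eval_within_bound by blast

lemma first_enumerated_unique:
  assumes "first_enumerated i s y" "first_enumerated i s' y'"
  shows "y = y'"
proof -
  have "\<not> s' < s" "\<not> s < s'"
    using assms enumerated_beyond_less unfolding first_enumerated_def by blast+
  then have "s = s'"
    by simp
  then show ?thesis
    using assms unfolding first_enumerated_def by (metis linorder_neqE_nat)
qed

lemma first_enumerated_exists:
  assumes "enumerated_beyond s i y"
  shows "\<exists>s y. first_enumerated i s y"
proof -
  define s0 where "s0 = (LEAST s. \<exists>y. enumerated_beyond s i y)"
  define y0 where "y0 = (LEAST y. enumerated_beyond s0 i y)"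
  have "\<exists>y. enumerated_beyond s0 i y"
    unfolding s0_def by (rule LeastI_ex) (use assms in blast)
  then have "enumerated_beyond s0 i y0"
    unfolding y0_def by (rule LeastI_ex)
  moreover have "\<not> enumerated_beyond s0 i y'" if "y' < y0" for y'
    using that unfolding y0_def by (rule not_less_Least)
  moreover have "\<not> enumerated_beyond s' i y'" if "s' < s0" for s' y'
    using that unfolding s0_def by (blast dest: not_less_Least)
  ultimately show ?thesis
    unfolding first_enumerated_def by blast
qed

lemma first_enumerated_in_W: "first_enumerated i s y \<Longrightarrow> y \<in> W i"
  unfolding first_enumerated_def enumerated_beyond_def W_iff_eval_within by blast

lemma first_enumerated_in_later_block: "first_enumerated i s y \<Longrightarrow> y \<in> block e \<Longrightarrow> i < e"
proof (rule ccontr)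
  assume "first_enumerated i s y" "y \<in> block e" "\<not> i < e"
  moreover from \<open>\<not> i < e\<close> have "e * e \<le> i * i"
    by (intro mult_le_mono) auto
  ultimately show False
    unfolding first_enumerated_def enumerated_beyond_def mem_block_iff by linarith
qed

lemma diag_witness_unique:
  assumes "diag_witness y" "diag_witness y'" "y \<in> block e" "y' \<in> block e"
  shows "y = y'"
proof -
  have False if "diag_witness y" "diag_witness y'" "y \<in> block e" "y' \<in> block e" "y < y'"
    for y y'
  proof -
    from that(1) obtain e1 where "y \<in> block e1" "phi e1 y = Some 0"
      unfolding diag_witness_def by blast
    moreover from that(2) obtain e2 where "y' \<in> block e2"
      "\<forall>z'<y'. z' \<in> block e2 \<longrightarrow> (\<exists>v. v \<noteq> 0 \<and> phi e2 z' = Some v)"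
      unfolding diag_witness_def by blast
    ultimately show False
      using that(3-5) block_unique by (metis option.inject)
  qed
  with assms show ?thesis
    by (metis linorder_neqE_nat)
qed

text \<open>At most one diagonal witness and, for each \<open>i < e\<close>, one element chosen by requirement
  \<open>i\<close> lie in \<open>block e\<close>; that is \<open>e + 1 < card (block e)\<close> elements.\<close>

lemma block_not_subset: "\<not> block e \<subseteq> simple_weu_set"
proof
  assume sub: "block e \<subseteq> simple_weu_set"
  let ?D = "{y \<in> block e. diag_witness y}"
  let ?S = "\<lambda>i. {y \<in> block e. \<exists>s. first_enumerated i s y}"
  have card_D: "card ?D \<le> 1"
    using diag_witness_unique finite_block by (auto simp: card_le_Suc0_iff_eq)
  have card_S: "card (?S i) \<le> 1" for i
    using first_enumerated_unique finite_block by (auto simp: card_le_Suc0_iff_eq)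
  have "block e \<subseteq> ?D \<union> (\<Union>i<e. ?S i)"
  proof
    fix y
    assume y: "y \<in> block e"
    with sub consider i s where "first_enumerated i s y" | "diag_witness y"
      unfolding simple_weu_set_def by blast
    then show "y \<in> ?D \<union> (\<Union>i<e. ?S i)"
      by cases (use y first_enumerated_in_later_block in blast)+
  qed
  then have "card (block e) \<le> card (?D \<union> (\<Union>i<e. ?S i))"
    by (rule card_mono[rotated]) (simp add: finite_block)
  also have "\<dots> \<le> card ?D + card (\<Union>i<e. ?S i)"
    by (rule card_Un_le)
  also have "\<dots> \<le> card ?D + (\<Sum>i<e. card (?S i))"
    by (intro add_left_mono card_UN_le) simp
  also have "\<dots> \<le> 1 + (\<Sum>i<e. 1)"
    using card_D card_S by (intro add_mono sum_mono)
  finally show False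
    by (simp add: card_block)
qed

lemma infinite_compl_simple_weu_set: "infinite (- simple_weu_set)"
  unfolding infinite_nat_iff_unbounded_le
proof
  fix m
  obtain y where "y \<in> block m" "y \<notin> simple_weu_set"
    using block_not_subset by blast
  moreover from \<open>y \<in> block m\<close> have "m \<le> y"
    by (simp add: mem_block_iff)
  ultimately show "\<exists>y\<ge>m. y \<in> - simple_weu_set"
    by blast
qed

lemma simple_simple_weu_set: "simple simple_weu_set"
  unfolding simple_def
proof (intro conjI re_simple_weu_set infinite_compl_simple_weu_set allI impI)
  fix i
  assume disjoint: "W i \<subseteq> - simple_weu_set"
  show "finite (W i)"
  proof (rule ccontr)
    assume "infinite (W i)"
    then obtain y where "y \<in> W i" "i * i + 4 * i + 3 \<le> y"
      by (meson finite_nat_set_iff_bounded_le not_le order.strict_implies_order)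
    then obtain s v where "eval_within s i y v"
      unfolding W_iff_eval_within by blast
    with \<open>i * i + 4 * i + 3 \<le> y\<close> have "enumerated_beyond (Suc s) i y"
      unfolding enumerated_beyond_def
      by (metis eval_within_Suc eval_within_bound less_SucI)
    then obtain s' y' where "first_enumerated i s' y'"
      using first_enumerated_exists by blast
    then show False
      using disjoint first_enumerated_in_W unfolding simple_weu_set_def by blast
  qed
qed

lemma defeats_on_block:
  assumes "\<forall>z\<in>block e. phi e z \<noteq> None"
  shows "\<exists>z\<in>block e. phi e z \<noteq> Some (if z \<in> simple_weu_set then 1 else 0)"
proof (cases "\<exists>z\<in>block e. phi e z = Some 0")
  case True
  define z0 where "z0 = (LEAST z. z \<in> block e \<and> phi e z = Some 0)"
  have z0: "z0 \<in> block e" "phi e z0 = Some 0"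
    using LeastI_ex[of "\<lambda>z. z \<in> block e \<and> phi e z = Some 0"] True unfolding z0_def by blast+
  have "\<exists>v. v \<noteq> 0 \<and> phi e z' = Some v" if "z' < z0" "z' \<in> block e" for z'
    using assms not_less_Least[OF that(1)[unfolded z0_def]] that(2) by auto
  then have "z0 \<in> simple_weu_set"
    unfolding simple_weu_set_def diag_witness_def using z0 by blast
  with z0 show ?thesis
    by (intro bexI[of _ z0]) auto
next
  case False
  obtain y where "y \<in> block e" "y \<notin> simple_weu_set"
    using block_not_subset by blast
  with False assms show ?thesis
    by auto
qed

lemma D_weu_simple_weu_set: "D_weu simple_weu_set"
  unfolding D_weu_def
proof (intro conjI re_simple_weu_set exI[of _ block] allI impI defeats_on_block)
  have "recursive (\<lambda>e. 2 ^ (e * e + 4 * e + 3) - 2 ^ (e * e + 2 * e))"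
    by (intro recursive_intros)
  then show "computable_fin block"
    unfolding computable_fin_def canon_index_block
    by (simp add: finite_block computable_total_if_recursive)
qed

theorem mainTheorem9:
  shows "\<exists>A. simple A \<and> D_weu A"
  using simple_simple_weu_set D_weu_simple_weu_set by blast

end
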